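(* Let $X\subseteq\{1,\dots,n\}$ and $x\in X$. Let $D(X,x)$ be the complex with \[ D(X,x)_i=\bigoplus_{(x_0,\dots,x_i)}\mathcal M_{X,\{x,x_0,\dots,x_i\}}\qquad(i\geq 0), \] the sum over all tuples of distinct elements of $X-\{x\}$, whose differential $\delta_i$ (for $i\geq 1$) sends the $(x_0,\dots,x_i)$-summand to the $(x_0,\dots,x_{i-1})$-summand via the map $\mathcal M_{X,\{x,x_0,\dots,x_i\}}\to\mathcal M_{X,\{x,x_0,\dots,x_{i-1}\}}$ induced by the inclusions $M_{\{x,x_0,\dots,x_i\}}\subseteq M_{\{x,x_0,\dots,x_{i-1}\}}$ and $J_{X-\{x,x_0,\dots,x_i\}}\subseteq J_{X-\{x,x_0,\dots,x_{i-1}\}}$, and with augmentation $\delta_0\colon D(X,x)_0\to\mathcal B_{X,x}$ induced on each summand by $M_{\{x,x_0\}}\subseteq B_{X,x}$ and $J_{X-\{x,x_0\}}\subseteq J_{X-\{x\}}$. Then $D(X,x)\to\mathcal B_{X,x}$ is a resolution, and so is $\mathbb 1\otimes_{\mathcal P_n}D(X,x)\to\mathbb 1\otimes_{\mathcal P_n}\mathcal B_{X,x}$.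
   Context: $R$ is a commutative ring, $\delta\in R$, and $\mathcal P_n=\mathcal P_n(R,\delta)$ is the partition algebra: the free $R$-module on set partitions ("diagrams") of $\{-n,\dots,-1,1,\dots,n\}$ (negative = left nodes, positive = right nodes), with product by stacking, taking the induced partition on outer nodes, and multiplying by $\delta$ for each component consisting only of middle nodes. $\mathbb 1$ is the trivial right module $R$ on which permutation diagrams (blocks all of the form $\{-i,j\}$) act as the identity and other diagrams as $0$. For $Z\subseteq\{1,\dots,n\}$, $J_Z$ is the left ideal spanned by diagrams in which among the right nodes labelled by $Z$ there is a singleton block or two distinct nodes in the same block. $B_{X,x}$ is the left submodule spanned by diagrams in which the right node $x$ lies in the same block as some other element of $X$, and $\mathcal B_{X,x}=B_{X,x}/(B_{X,x}\cap J_{X-\{x\}})$. For $Y\subseteq X$, $M_Y$ is the span of diagrams in which all right nodes in $Y$ lie in one block, and $\mathcal M_{X,Y}=M_Y/(M_Y\cap J_{X-Y})$. *)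

theory Defs
  imports "HOL-Library.Disjoint_Sets"
begin

type_synonym diagram = "int set set"

text \<open>Nodes: left nodes -n..-1 (negative), right nodes 1..n (positive).\<close>
definition nodes :: "nat \<Rightarrow> int set" where
  "nodes n = {i. i \<noteq> 0 \<and> \<bar>i\<bar> \<le> int n}"

definition diagrams :: "nat \<Rightarrow> diagram set" where
  "diagrams n = {d. partition_on (nodes n) d}"

definition blk :: "diagram \<Rightarrow> int \<Rightarrow> int \<Rightarrow> bool" where
  "blk d a b \<longleftrightarrow> (\<exists>B\<in>d. a \<in> B \<and> b \<in> B)"

text \<open>Stacking d1 (left) and d2 (right): layer 0 = left nodes of d1,
  layer 1 = middle nodes (right nodes of d1 = left nodes of d2), layer 2 = right nodes of d2.\<close>
definition emb1 :: "int \<Rightarrow> nat \<times> int" where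
  "emb1 a = (if a < 0 then (0, a) else (1, a))"

definition emb2 :: "int \<Rightarrow> nat \<times> int" where
  "emb2 a = (if a < 0 then (1, - a) else (2, a))"

definition outer :: "int \<Rightarrow> nat \<times> int" where
  "outer a = (if a < 0 then (0, a) else (2, a))"

definition stack_conn :: "diagram \<Rightarrow> diagram \<Rightarrow> ((nat \<times> int) \<times> (nat \<times> int)) set" where
  "stack_conn d1 d2 =
     ({(emb1 a, emb1 b) | a b. blk d1 a b} \<union> {(emb2 a, emb2 b) | a b. blk d2 a b})\<^sup>+"

definition diag_comp :: "nat \<Rightarrow> diagram \<Rightarrow> diagram \<Rightarrow> diagram" where
  "diag_comp n d1 d2 =
     {{b \<in> nodes n. (outer a, outer b) \<in> stack_conn d1 d2} | a. a \<in> nodes n}"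

definition loops :: "nat \<Rightarrow> diagram \<Rightarrow> diagram \<Rightarrow> nat" where
  "loops n d1 d2 = card {stack_conn d1 d2 `` {(1, j)} | j.
      j \<in> {1..int n} \<and> (\<forall>b \<in> nodes n. ((1, j), outer b) \<notin> stack_conn d1 d2)}"

text \<open>An element of a direct sum (indexed by 'i) of copies of P_n(R,delta) is a function
  'i \<times> diagram \<Rightarrow> R (coefficients on the diagram basis).  Left action of a diagram e:\<close>
definition dact :: "nat \<Rightarrow> 'r::comm_ring_1 \<Rightarrow> diagram \<Rightarrow> ('i \<times> diagram \<Rightarrow> 'r) \<Rightarrow> ('i \<times> diagram \<Rightarrow> 'r)" where
  "dact n \<delta> e f = (\<lambda>(t, g). \<Sum>d \<in> {d \<in> diagrams n. diag_comp n e d = g}. \<delta> ^ loops n e d * f (t, d))"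

text \<open>Trivial module 1: permutation diagrams act by 1, others by 0.\<close>
definition perm_diagram :: "nat \<Rightarrow> diagram \<Rightarrow> bool" where
  "perm_diagram n d \<longleftrightarrow> d \<in> diagrams n \<and>
     (\<forall>B\<in>d. \<exists>i j. i \<in> {1..int n} \<and> j \<in> {1..int n} \<and> B = {-i, j})"

definition triv :: "nat \<Rightarrow> diagram \<Rightarrow> 'r::comm_ring_1" where
  "triv n d = (if perm_diagram n d then 1 else 0)"

inductive_set rspan :: "('a \<Rightarrow> 'r::comm_ring_1) set \<Rightarrow> ('a \<Rightarrow> 'r) set" for S where
  zero: "(\<lambda>_. 0) \<in> rspan S"
| gen: "v \<in> S \<Longrightarrow> v \<in> rspan S"
| add: "u \<in> rspan S \<Longrightarrow> v \<in> rspan S \<Longrightarrow> (\<lambda>a. u a + v a) \<in> rspan S"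
| smult: "v \<in> rspan S \<Longrightarrow> (\<lambda>a. r * v a) \<in> rspan S"

text \<open>Functions supported in S: the R-span of the basis elements in S.\<close>
definition supp_in :: "'a set \<Rightarrow> ('a \<Rightarrow> 'r::zero) set" where
  "supp_in S = {f. \<forall>a. f a \<noteq> 0 \<longrightarrow> a \<in> S}"

definition ksum :: "('a \<Rightarrow> 'r::comm_ring_1) set \<Rightarrow> ('a \<Rightarrow> 'r) set \<Rightarrow> ('a \<Rightarrow> 'r) set" where
  "ksum K L = {(\<lambda>a. u a + v a) | u v. u \<in> K \<and> v \<in> L}"

text \<open>For a module A/K, the module 1 \<otimes>_{P_n} (A/K) is A/(K + span{e.a - eps(e) a}).\<close>
definition triv_rel :: "nat \<Rightarrow> 'r::comm_ring_1 \<Rightarrow> ('i \<times> diagram \<Rightarrow> 'r) set \<Rightarrow> ('i \<times> diagram \<Rightarrow> 'r) set" where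
  "triv_rel n \<delta> A = rspan {(\<lambda>a. dact n \<delta> e v a - triv n e * v a) | e v. e \<in> diagrams n \<and> v \<in> A}"

definition tensor_triv_ker :: "nat \<Rightarrow> 'r::comm_ring_1 \<Rightarrow> ('i \<times> diagram \<Rightarrow> 'r) set \<Rightarrow> ('i \<times> diagram \<Rightarrow> 'r) set \<Rightarrow> ('i \<times> diagram \<Rightarrow> 'r) set" where
  "tensor_triv_ker n \<delta> A K = ksum K (triv_rel n \<delta> A)"

section \<open>Exactness of sequences of subquotients A/K (maps given on representatives)\<close>

definition sq_exact :: "('a \<Rightarrow> 'r::comm_ring_1) set \<Rightarrow> ('b \<Rightarrow> 'r) set \<Rightarrow> ('b \<Rightarrow> 'r) set \<Rightarrow>
    ('c \<Rightarrow> 'r) set \<Rightarrow> (('a \<Rightarrow> 'r) \<Rightarrow> ('b \<Rightarrow> 'r)) \<Rightarrow> (('b \<Rightarrow> 'r) \<Rightarrow> ('c \<Rightarrow> 'r)) \<Rightarrow> bool" where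
  "sq_exact A1 A2 K2 K3 f g \<longleftrightarrow>
     (\<forall>u\<in>A1. g (f u) \<in> K3) \<and>
     (\<forall>v\<in>A2. g v \<in> K3 \<longrightarrow> (\<exists>u\<in>A1. (\<lambda>a. v a - f u a) \<in> K2))"

definition sq_surj :: "('a \<Rightarrow> 'r::comm_ring_1) set \<Rightarrow> ('b \<Rightarrow> 'r) set \<Rightarrow> ('b \<Rightarrow> 'r) set \<Rightarrow>
    (('a \<Rightarrow> 'r) \<Rightarrow> ('b \<Rightarrow> 'r)) \<Rightarrow> bool" where
  "sq_surj A1 A2 K2 f \<longleftrightarrow> (\<forall>v\<in>A2. \<exists>u\<in>A1. (\<lambda>a. v a - f u a) \<in> K2)"

definition Jset :: "int set \<Rightarrow> diagram \<Rightarrow> bool" where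
  "Jset Z d \<longleftrightarrow> (\<exists>z\<in>Z. {z} \<in> d) \<or> (\<exists>z1\<in>Z. \<exists>z2\<in>Z. z1 \<noteq> z2 \<and> blk d z1 z2)"

definition Bset :: "int set \<Rightarrow> int \<Rightarrow> diagram \<Rightarrow> bool" where
  "Bset X x d \<longleftrightarrow> (\<exists>y\<in>X. y \<noteq> x \<and> blk d x y)"

definition Mset :: "int set \<Rightarrow> diagram \<Rightarrow> bool" where
  "Mset Y d \<longleftrightarrow> (\<exists>B\<in>d. Y \<subseteq> B)"

definition tuples :: "int set \<Rightarrow> int \<Rightarrow> nat \<Rightarrow> int list set" where
  "tuples X x i = {t. length t = Suc i \<and> distinct t \<and> set t \<subseteq> X - {x}}"

text \<open>D_i = (sum of M_{x,t}) / (sum of M_{x,t} \<inter> J_{X-{x,t}}), presented as carrier/kernel.\<close>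
definition D_car :: "nat \<Rightarrow> int set \<Rightarrow> int \<Rightarrow> nat \<Rightarrow> (int list \<times> diagram \<Rightarrow> 'r::comm_ring_1) set" where
  "D_car n X x i = supp_in {(t, d). t \<in> tuples X x i \<and> d \<in> diagrams n \<and> Mset (insert x (set t)) d}"

definition D_ker :: "nat \<Rightarrow> int set \<Rightarrow> int \<Rightarrow> nat \<Rightarrow> (int list \<times> diagram \<Rightarrow> 'r::comm_ring_1) set" where
  "D_ker n X x i = supp_in {(t, d). t \<in> tuples X x i \<and> d \<in> diagrams n \<and>
       Mset (insert x (set t)) d \<and> Jset (X - insert x (set t)) d}"

definition B_car :: "nat \<Rightarrow> int set \<Rightarrow> int \<Rightarrow> (unit \<times> diagram \<Rightarrow> 'r::comm_ring_1) set" where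
  "B_car n X x = supp_in {(u, d). d \<in> diagrams n \<and> Bset X x d}"

definition B_ker :: "nat \<Rightarrow> int set \<Rightarrow> int \<Rightarrow> (unit \<times> diagram \<Rightarrow> 'r::comm_ring_1) set" where
  "B_ker n X x = supp_in {(u, d). d \<in> diagrams n \<and> Bset X x d \<and> Jset (X - {x}) d}"

definition D_diff :: "int set \<Rightarrow> int \<Rightarrow> nat \<Rightarrow> (int list \<times> diagram \<Rightarrow> 'r::comm_ring_1) \<Rightarrow> (int list \<times> diagram \<Rightarrow> 'r)" where
  "D_diff X x i F = (\<lambda>(s, d). \<Sum>t \<in> {t \<in> tuples X x (Suc i). butlast t = s}. F (t, d))"

definition D_aug :: "int set \<Rightarrow> int \<Rightarrow> (int list \<times> diagram \<Rightarrow> 'r::comm_ring_1) \<Rightarrow> (unit \<times> diagram \<Rightarrow> 'r)" where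
  "D_aug X x F = (\<lambda>(u, d). \<Sum>t \<in> tuples X x 0. F (t, d))"

end

theory Submission
  imports Defs
begin

(* Fix a diagram d and let C be its block containing x. The coordinate (t, d) of D(X,x)_i is
   nonzero only if set t lies in C, and it dies modulo J as soon as two elements of
   X - {x} - set t share a block (or one of them is a singleton). So on a surviving coordinate at
   most one y in X - {x} - set t lies in C. Lifting v by u(t, d) = v(butlast t, d) whenever last t
   lies in C therefore inverts the differential on every surviving coordinate that has such a y;
   on the others the coordinate (butlast t, d) survives as well, the differential of v there is
   just v(t, d), and the cycle condition makes it vanish.

   After tensoring with the trivial module everything vanishes: every basis diagram d of D(X,x)_i
   and of B_{X,x} has two distinct right nodes in one block, so it acts by 0 on the trivial
   module, while d = d d' without closed loops for the diagram d' whose blocks are the sets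
   P \<union> -P, P running over the right parts of the blocks of d, and e_d' lies in the same module.
   Hence e_d = d e_d' - eps(d) e_d' is one of the defining relations of the tensor product. *)

lemma diagram_block_unique:
  assumes "d \<in> diagrams n" "B \<in> d" "C \<in> d" "a \<in> B" "a \<in> C"
  shows "B = C"
  using assms by (auto simp: diagrams_def partition_on_def disjoint_def)

lemma blk_sym: "blk d a b \<Longrightarrow> blk d b a"
  unfolding blk_def by blast

lemma blk_trans: "d \<in> diagrams n \<Longrightarrow> blk d a b \<Longrightarrow> blk d b c \<Longrightarrow> blk d a c"
  unfolding blk_def using diagram_block_unique by metis

lemma blk_singleton: "d \<in> diagrams n \<Longrightarrow> {b} \<in> d \<Longrightarrow> blk d a b \<Longrightarrow> a = b"
  unfolding blk_def using diagram_block_unique by blast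

lemma blk_iff_Mset: "blk d a b \<longleftrightarrow> Mset {a, b} d"
  unfolding blk_def Mset_def by blast

lemma Mset_blk: "Mset Y d \<Longrightarrow> a \<in> Y \<Longrightarrow> b \<in> Y \<Longrightarrow> blk d a b"
  unfolding Mset_def blk_def by blast

lemma Mset_antimono: "Mset Y d \<Longrightarrow> Z \<subseteq> Y \<Longrightarrow> Mset Z d"
  unfolding Mset_def by blast

lemma Mset_insert_insert_iff:
  assumes "d \<in> diagrams n" "Mset (insert a Y) d"
  shows "Mset (insert a (insert b Y)) d \<longleftrightarrow> blk d a b"
proof
  assume "blk d a b"
  then obtain C where C: "C \<in> d" "a \<in> C" "b \<in> C" unfolding blk_def by blast
  obtain B where B: "B \<in> d" "insert a Y \<subseteq> B" using assms(2) unfolding Mset_def by blast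
  have "B = C" using diagram_block_unique[OF assms(1) B(1) C(1)] B(2) C(2) by blast
  then show "Mset (insert a (insert b Y)) d" using B C unfolding Mset_def by blast
qed (simp add: Mset_blk)

lemma Jset_insert_iff:
  "Jset (insert y Z) d \<longleftrightarrow> Jset Z d \<or> {y} \<in> d \<or> (\<exists>z\<in>Z. z \<noteq> y \<and> blk d y z)"
  unfolding Jset_def by (auto dest: blk_sym)

lemma blk_unique_if_not_Jset:
  assumes "d \<in> diagrams n" "\<not> Jset Z d" "y \<in> Z" "z \<in> Z" "blk d a y" "blk d a z"
  shows "y = z"
  using assms blk_trans[OF assms(1) blk_sym] unfolding Jset_def by blast

lemma sum_blk_if_not_Jset:
  assumes "finite Z" "d \<in> diagrams n" "\<not> Jset Z d"
  shows "(\<Sum>y\<in>Z. if blk d a y then c else 0) = (if \<exists>y\<in>Z. blk d a y then c else 0)"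
proof (cases "\<exists>y\<in>Z. blk d a y")
  case True
  then obtain y where y: "y \<in> Z" "blk d a y" by blast
  have "blk d a z \<longleftrightarrow> z = y" if "z \<in> Z" for z
    using blk_unique_if_not_Jset[OF assms(2,3) that y(1) _ y(2)] y(2) by blast
  then have "(\<Sum>z\<in>Z. if blk d a z then c else 0) = (\<Sum>z\<in>Z. if z = y then c else 0)"
    by (intro sum.cong) auto
  then show ?thesis using assms(1) y True by simp
qed simp

lemma finite_diagrams: "finite (diagrams n)"
proof -
  have "finite (nodes n)"
    by (rule finite_subset[of _ "{- int n..int n}"]) (auto simp: nodes_def)
  moreover have "diagrams n \<subseteq> Pow (Pow (nodes n))"
    by (auto simp: diagrams_def partition_on_def)
  ultimately show ?thesis by (meson finite_Pow_iff finite_subset)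
qed

lemma diagram_block_subset: "d \<in> diagrams n \<Longrightarrow> B \<in> d \<Longrightarrow> B \<subseteq> nodes n"
  by (auto simp: diagrams_def partition_on_def)

lemma diagram_covers: "d \<in> diagrams n \<Longrightarrow> a \<in> nodes n \<Longrightarrow> \<exists>B\<in>d. a \<in> B"
  by (auto simp: diagrams_def partition_on_def)

lemma finite_tuples: "finite X \<Longrightarrow> finite (tuples X x i)"
  unfolding tuples_def
  by (rule finite_subset[OF _ finite_lists_length_eq[of X "Suc i"]]) auto

lemma butlast_in_tuples: "t \<in> tuples X x (Suc i) \<Longrightarrow> butlast t \<in> tuples X x i"
  unfolding tuples_def using in_set_butlastD by (fastforce simp: distinct_butlast)

lemma tuples_snoc:
  assumes "t \<in> tuples X x i"
  shows "butlast t @ [last t] = t" "last t \<in> X - insert x (set (butlast t))"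
    and "set t = insert (last t) (set (butlast t))"
proof -
  have ne: "t \<noteq> []" and "distinct t" "set t \<subseteq> X - {x}" using assms by (auto simp: tuples_def)
  then show snoc: "butlast t @ [last t] = t" by simp
  with \<open>distinct t\<close> have "distinct (butlast t @ [last t])" by simp
  then show "last t \<in> X - insert x (set (butlast t))"
    using last_in_set[OF ne] \<open>set t \<subseteq> X - {x}\<close> by auto
  have "set (butlast t @ [last t]) = insert (last t) (set (butlast t))" by simp
  then show "set t = insert (last t) (set (butlast t))" by (simp only: snoc)
qed

lemma tuple_extensions:
  assumes "distinct s" "set s \<subseteq> X - {x}"
  shows "{t \<in> tuples X x (length s). butlast t = s} = (\<lambda>y. s @ [y]) ` (X - insert x (set s))"
proof (intro equalityI subsetI)
  fix t assume "t \<in> {t \<in> tuples X x (length s). butlast t = s}"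
  then show "t \<in> (\<lambda>y. s @ [y]) ` (X - insert x (set s))"
    using tuples_snoc[of t X x "length s"] by (metis (mono_tags, lifting) image_eqI mem_Collect_eq)
qed (use assms in \<open>auto simp: tuples_def\<close>)

lemma sum_tuple_extensions:
  assumes "distinct s" "set s \<subseteq> X - {x}"
  shows "(\<Sum>t\<in>{t \<in> tuples X x (length s). butlast t = s}. f t)
       = (\<Sum>y\<in>X - insert x (set s). f (s @ [y]))"
  unfolding tuple_extensions[OF assms] by (simp add: sum.reindex inj_on_def)

section \<open>Exactness of the augmented complex\<close>

lemma supp_inD: "f \<in> supp_in S \<Longrightarrow> f a \<noteq> 0 \<Longrightarrow> a \<in> S"
  unfolding supp_in_def by blast

lemma supp_inI: "(\<And>t d. f (t, d) \<noteq> 0 \<Longrightarrow> (t, d) \<in> S) \<Longrightarrow> f \<in> supp_in S"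
  unfolding supp_in_def by auto

lemma D_car_nonzero:
  "v \<in> D_car n X x i \<Longrightarrow> v (t, d) \<noteq> 0 \<Longrightarrow>
    t \<in> tuples X x i \<and> d \<in> diagrams n \<and> Mset (insert x (set t)) d"
  by (auto simp: D_car_def supp_in_def)

definition D_lift ::
    "int set \<Rightarrow> int \<Rightarrow> nat \<Rightarrow> (int list \<times> diagram \<Rightarrow> 'r::comm_ring_1) \<Rightarrow> (int list \<times> diagram \<Rightarrow> 'r)"
  where "D_lift X x i v = (\<lambda>(t, d). if t \<in> tuples X x i \<and> blk d x (last t) then v (butlast t, d) else 0)"

lemma D_lift_in_D_car:
  assumes v: "v \<in> D_car n X x k"
  shows "D_lift X x (Suc k) v \<in> D_car n X x (Suc k)"
  unfolding D_car_def
proof (rule supp_inI)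
  fix t d assume "D_lift X x (Suc k) v (t, d) \<noteq> 0"
  then have t: "t \<in> tuples X x (Suc k)" and x_last: "blk d x (last t)" and "v (butlast t, d) \<noteq> 0"
    by (auto simp: D_lift_def split: if_splits)
  then have d: "d \<in> diagrams n" and "Mset (insert x (set (butlast t))) d"
    using D_car_nonzero[OF v] by auto
  then have "Mset (insert x (insert (last t) (set (butlast t)))) d"
    using Mset_insert_insert_iff x_last by blast
  then have "Mset (insert x (set t)) d" by (simp add: tuples_snoc(3)[OF t])
  with t d show "(t, d) \<in> {(t, d). t \<in> tuples X x (Suc k) \<and> d \<in> diagrams n \<and> Mset (insert x (set t)) d}"
    by simp
qed

lemma D_diff_D_lift:
  assumes "s \<in> tuples X x k"
  shows "D_diff X x k (D_lift X x (Suc k) v) (s, d)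
       = (\<Sum>y\<in>X - insert x (set s). if blk d x y then v (s, d) else 0)"
proof -
  have s: "distinct s" "set s \<subseteq> X - {x}" "length s = Suc k" using assms by (auto simp: tuples_def)
  have ext: "s @ [y] \<in> tuples X x (Suc k)" if "y \<in> X - insert x (set s)" for y
    using s that by (auto simp: tuples_def)
  have "D_diff X x k (D_lift X x (Suc k) v) (s, d)
      = (\<Sum>t\<in>{t \<in> tuples X x (length s). butlast t = s}. D_lift X x (Suc k) v (t, d))"
    by (simp add: D_diff_def s(3))
  also have "\<dots> = (\<Sum>y\<in>X - insert x (set s). D_lift X x (Suc k) v (s @ [y], d))"
    by (rule sum_tuple_extensions[OF s(1,2)])
  also have "\<dots> = (\<Sum>y\<in>X - insert x (set s). if blk d x y then v (s, d) else 0)"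
    using ext by (intro sum.cong) (auto simp: D_lift_def)
  finally show ?thesis .
qed

lemma D_aug_D_lift:
  "D_aug X x (D_lift X x 0 w) (u, d) = (\<Sum>y\<in>X - {x}. if blk d x y then w ([], d) else 0)"
proof -
  have tuples0: "{t \<in> tuples X x 0. butlast t = []} = tuples X x 0"
    by (auto simp: tuples_def length_Suc_conv)
  have "D_aug X x (D_lift X x 0 w) (u, d) = (\<Sum>t\<in>tuples X x 0. D_lift X x 0 w (t, d))"
    by (simp add: D_aug_def)
  also have "\<dots> = (\<Sum>y\<in>X - {x}. D_lift X x 0 w ([y], d))"
    using sum_tuple_extensions[of "[]" X x] by (simp add: tuples0)
  also have "\<dots> = (\<Sum>y\<in>X - {x}. if blk d x y then w ([], d) else 0)"
    by (intro sum.cong) (auto simp: D_lift_def tuples_def)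
  finally show ?thesis .
qed

lemma not_Jset_butlast:
  assumes d: "d \<in> diagrams n" and s: "s \<in> tuples X x k" and M: "Mset (insert x (set s)) d"
    and nJ: "\<not> Jset (X - insert x (set s)) d"
    and no_ext: "\<forall>y\<in>X - insert x (set s). \<not> blk d x y"
  shows "\<not> Jset (X - insert x (set (butlast s))) d"
proof -
  have l: "last s \<in> X - insert x (set (butlast s))" by (rule tuples_snoc(2)[OF s])
  have Z: "X - insert x (set (butlast s)) = insert (last s) (X - insert x (set s))"
    using l tuples_snoc(3)[OF s] by blast
  have x_l: "blk d x (last s)" using Mset_blk[OF M] tuples_snoc(3)[OF s] by blast
  have "{last s} \<notin> d" using blk_singleton[OF d _ x_l] l by blast
  moreover have "\<not> (\<exists>z\<in>X - insert x (set s). z \<noteq> last s \<and> blk d (last s) z)"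
    using no_ext blk_trans[OF d x_l] by blast
  ultimately show ?thesis unfolding Z Jset_insert_iff using nJ by blast
qed

lemma D_car_sibling_sum:
  assumes fin: "finite X" and v: "v \<in> D_car n X x k" and s: "s \<in> tuples X x k"
    and no_ext: "\<forall>y\<in>X - insert x (set s). \<not> blk d x y"
  shows "(\<Sum>t\<in>{t \<in> tuples X x k. butlast t = butlast s}. v (t, d)) = v (s, d)"
proof -
  have "v (t, d) = 0" if t: "t \<in> tuples X x k" "butlast t = butlast s" "t \<noteq> s" for t
  proof (rule ccontr)
    assume "v (t, d) \<noteq> 0"
    then have "Mset (insert x (set t)) d" using D_car_nonzero[OF v] by blast
    then have "blk d x (last t)" using Mset_blk tuples_snoc(3)[OF t(1)] by blast
    moreover have "last t \<noteq> last s"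
      using tuples_snoc(1)[OF t(1)] tuples_snoc(1)[OF s] t(2,3) by metis
    then have "last t \<in> X - insert x (set s)"
      using tuples_snoc(2)[OF t(1)] tuples_snoc(3)[OF s] t(2) by auto
    ultimately show False using no_ext by blast
  qed
  then have "(\<Sum>t\<in>{t \<in> tuples X x k. butlast t = butlast s}. v (t, d)) = (\<Sum>t\<in>{s}. v (t, d))"
    using s finite_tuples[OF fin] by (intro sum.mono_neutral_right) auto
  then show ?thesis by simp
qed

(* The hypothesis says that the image of v vanishes at each coordinate (butlast s, d) surviving
   modulo J; it covers the differential and, for s = [x_0], the augmentation alike. *)
lemma D_lift_exact:
  fixes v :: "int list \<times> diagram \<Rightarrow> 'r::comm_ring_1"
  assumes fin: "finite X" and v: "v \<in> D_car n X x k"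
    and cycle: "\<And>s d. s \<in> tuples X x k \<Longrightarrow> d \<in> diagrams n \<Longrightarrow> Mset (insert x (set s)) d \<Longrightarrow>
      \<not> Jset (X - insert x (set (butlast s))) d \<Longrightarrow>
      (\<Sum>t\<in>{t \<in> tuples X x k. butlast t = butlast s}. v (t, d)) = 0"
  shows "(\<lambda>a. v a - D_diff X x k (D_lift X x (Suc k) v) a) \<in> D_ker n X x k"
  unfolding D_ker_def
proof (rule supp_inI)
  fix s d
  assume ne: "v (s, d) - D_diff X x k (D_lift X x (Suc k) v) (s, d) \<noteq> 0"
  have v_ne: "v (s, d) \<noteq> 0"
  proof
    assume "v (s, d) = 0"
    then have "D_diff X x k (D_lift X x (Suc k) v) (s, d) = 0"
      by (auto simp: D_diff_def D_lift_def intro!: sum.neutral)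
    with ne \<open>v (s, d) = 0\<close> show False by simp
  qed
  then have s: "s \<in> tuples X x k" and d: "d \<in> diagrams n" and M: "Mset (insert x (set s)) d"
    using D_car_nonzero[OF v] by auto
  have "Jset (X - insert x (set s)) d"
  proof (rule ccontr)
    assume nJ: "\<not> Jset (X - insert x (set s)) d"
    have lift: "D_diff X x k (D_lift X x (Suc k) v) (s, d)
        = (if \<exists>y\<in>X - insert x (set s). blk d x y then v (s, d) else 0)"
      using D_diff_D_lift[OF s, of v d] sum_blk_if_not_Jset[OF _ d nJ, where a = x and c = "v (s, d)"] fin
      by (simp add: finite_Diff)
    show False
    proof (cases "\<exists>y\<in>X - insert x (set s). blk d x y")
      case True
      with ne lift show False by simp
    next
      case False
      then have no_ext: "\<forall>y\<in>X - insert x (set s). \<not> blk d x y" by blast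
      have "v (s, d) = 0"
        using cycle[OF s d M not_Jset_butlast[OF d s M nJ no_ext]] D_car_sibling_sum[OF fin v s no_ext]
        by simp
      with v_ne show False ..
    qed
  qed
  with s d M show "(s, d) \<in> {(t, d). t \<in> tuples X x k \<and> d \<in> diagrams n \<and>
      Mset (insert x (set t)) d \<and> Jset (X - insert x (set t)) d}"
    by simp
qed

lemma D_diff_nonzero:
  "D_diff X x i v (s, d) \<noteq> 0 \<Longrightarrow> \<exists>t\<in>tuples X x (Suc i). butlast t = s \<and> v (t, d) \<noteq> 0"
  unfolding D_diff_def by (auto dest: sum.not_neutral_contains_not_neutral)

lemma D_aug_nonzero: "D_aug X x v (w, d) \<noteq> 0 \<Longrightarrow> \<exists>t\<in>tuples X x 0. v (t, d) \<noteq> 0"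
  unfolding D_aug_def by (auto dest: sum.not_neutral_contains_not_neutral)

lemma Jset_of_two_extensions:
  assumes t: "t \<in> tuples X x (Suc k)" and M: "Mset (insert x (set t)) d"
  shows "Jset (X - insert x (set (butlast (butlast t)))) d"
proof -
  have t': "butlast t \<in> tuples X x k" by (rule butlast_in_tuples[OF t])
  let ?s = "butlast (butlast t)" and ?a = "last (butlast t)" and ?b = "last t"
  have a: "?a \<in> X - insert x (set ?s)" by (rule tuples_snoc(2)[OF t'])
  have b: "?b \<in> X - insert x (set (butlast t))" by (rule tuples_snoc(2)[OF t])
  have sets: "set (butlast t) = insert ?a (set ?s)" "set t = insert ?b (set (butlast t))"
    using tuples_snoc(3) t t' by blast+
  have "blk d ?a ?b" using Mset_blk[OF M] sets by blast
  moreover have "?a \<noteq> ?b" and "?b \<in> X - insert x (set ?s)" using b[unfolded sets(1)] by auto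
  ultimately show ?thesis using a unfolding Jset_def by blast
qed

lemma D_diff_D_diff_in_D_ker:
  assumes u: "u \<in> D_car n X x (Suc (Suc i))"
  shows "D_diff X x i (D_diff X x (Suc i) u) \<in> D_ker n X x i"
  unfolding D_ker_def
proof (rule supp_inI)
  fix s d assume "D_diff X x i (D_diff X x (Suc i) u) (s, d) \<noteq> 0"
  then obtain t where t: "t \<in> tuples X x (Suc (Suc i))" "butlast (butlast t) = s" "u (t, d) \<noteq> 0"
    using D_diff_nonzero by metis
  then have d: "d \<in> diagrams n" and M: "Mset (insert x (set t)) d"
    using D_car_nonzero[OF u] by auto
  have "s \<in> tuples X x i" using butlast_in_tuples[OF butlast_in_tuples[OF t(1)]] t(2) by simp
  moreover have "insert x (set s) \<subseteq> insert x (set t)"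
    using t(2) by (auto dest!: in_set_butlastD)
  then have "Mset (insert x (set s)) d" by (rule Mset_antimono[OF M])
  moreover have "Jset (X - insert x (set s)) d" using Jset_of_two_extensions[OF t(1) M] t(2) by simp
  ultimately show "(s, d) \<in> {(t, d). t \<in> tuples X x i \<and> d \<in> diagrams n \<and>
      Mset (insert x (set t)) d \<and> Jset (X - insert x (set t)) d}"
    using d by simp
qed

lemma D_aug_D_diff_in_B_ker:
  assumes u: "u \<in> D_car n X x 1"
  shows "D_aug X x (D_diff X x 0 u) \<in> B_ker n X x"
  unfolding B_ker_def
proof (rule supp_inI)
  fix w d assume "D_aug X x (D_diff X x 0 u) (w, d) \<noteq> 0"
  then obtain t where t: "t \<in> tuples X x (Suc 0)" "u (t, d) \<noteq> 0"
    using D_aug_nonzero D_diff_nonzero by metis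
  then have d: "d \<in> diagrams n" and M: "Mset (insert x (set t)) d"
    using D_car_nonzero[OF u] by auto
  have "butlast (butlast t) = []" using t(1) by (auto simp: tuples_def length_Suc_conv)
  then have "Jset (X - {x}) d" using Jset_of_two_extensions[OF t(1) M] by simp
  moreover have "t \<noteq> []" using t(1) by (auto simp: tuples_def)
  then have "last t \<in> set t" by simp
  moreover from this have "last t \<in> X - {x}" using t(1) by (auto simp: tuples_def)
  ultimately have "Bset X x d" using Mset_blk[OF M] unfolding Bset_def by blast
  with \<open>Jset (X - {x}) d\<close> d show "(w, d) \<in> {(u, d). d \<in> diagrams n \<and> Bset X x d \<and> Jset (X - {x}) d}"
    by simp
qed

lemma D_aug_surj:
  assumes fin: "finite X"
  shows "sq_surj (D_car n X x 0) (B_car n X x) (B_ker n X x)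
      (D_aug X x :: _ \<Rightarrow> unit \<times> diagram \<Rightarrow> 'r::comm_ring_1)"
  unfolding sq_surj_def
proof
  fix v :: "unit \<times> diagram \<Rightarrow> 'r" assume v: "v \<in> B_car n X x"
  let ?u = "D_lift X x 0 (\<lambda>a. v ((), snd a))"
  have v_nonzero: "d \<in> diagrams n \<and> Bset X x d" if "v ((), d) \<noteq> 0" for d
    using supp_inD[OF v[unfolded B_car_def] that] by simp
  have "?u \<in> D_car n X x 0"
    unfolding D_car_def
  proof (rule supp_inI)
    fix t d assume "?u (t, d) \<noteq> 0"
    then have t: "t \<in> tuples X x 0" and "blk d x (last t)" and "v ((), d) \<noteq> 0"
      by (auto simp: D_lift_def split: if_splits)
    moreover have "set t = {last t}" using t by (auto simp: tuples_def length_Suc_conv)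
    ultimately show "(t, d) \<in> {(t, d). t \<in> tuples X x 0 \<and> d \<in> diagrams n \<and> Mset (insert x (set t)) d}"
      using v_nonzero by (simp add: blk_iff_Mset)
  qed
  moreover have "(\<lambda>a. v a - D_aug X x ?u a) \<in> B_ker n X x"
    unfolding B_ker_def
  proof (rule supp_inI)
    fix w d assume ne: "v (w, d) - D_aug X x ?u (w, d) \<noteq> 0"
    have aug: "D_aug X x ?u (w, d) = (\<Sum>y\<in>X - {x}. if blk d x y then v ((), d) else 0)"
      by (simp add: D_aug_D_lift cong: if_cong)
    have "v ((), d) \<noteq> 0" using ne unfolding aug by (auto cong: if_cong)
    then have d: "d \<in> diagrams n" and B: "Bset X x d" using v_nonzero by auto
    have "Jset (X - {x}) d"
    proof (rule ccontr)
      assume nJ: "\<not> Jset (X - {x}) d"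
      have "\<exists>y\<in>X - {x}. blk d x y" using B unfolding Bset_def by blast
      then have "D_aug X x ?u (w, d) = v ((), d)"
        using aug sum_blk_if_not_Jset[OF _ d nJ, where a = x and c = "v ((), d)"] fin by simp
      with ne show False by simp
    qed
    with d B show "(w, d) \<in> {(u, d). d \<in> diagrams n \<and> Bset X x d \<and> Jset (X - {x}) d}"
      by simp
  qed
  ultimately show "\<exists>u\<in>D_car n X x 0. (\<lambda>a. v a - D_aug X x u a) \<in> B_ker n X x" by blast
qed

lemma D_aug_exact:
  assumes fin: "finite X"
  shows "sq_exact (D_car n X x 1) (D_car n X x 0) (D_ker n X x 0) (B_ker n X x)
      (D_diff X x 0) (D_aug X x :: _ \<Rightarrow> unit \<times> diagram \<Rightarrow> 'r::comm_ring_1)"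
  unfolding sq_exact_def
proof (intro conjI ballI impI)
  fix v :: "int list \<times> diagram \<Rightarrow> 'r"
  assume v: "v \<in> D_car n X x 0" and aug: "D_aug X x v \<in> B_ker n X x"
  have "(\<lambda>a. v a - D_diff X x 0 (D_lift X x (Suc 0) v) a) \<in> D_ker n X x 0"
  proof (rule D_lift_exact[OF fin v])
    fix s d assume s: "s \<in> tuples X x 0" and nJ: "\<not> Jset (X - insert x (set (butlast s))) d"
    have "butlast s = []" "{t \<in> tuples X x 0. butlast t = []} = tuples X x 0"
      using s by (auto simp: tuples_def length_Suc_conv)
    moreover have "D_aug X x v ((), d) = 0"
      using supp_inD[OF aug[unfolded B_ker_def], of "((), d)"] nJ \<open>butlast s = []\<close> by auto
    ultimately show "(\<Sum>t\<in>{t \<in> tuples X x 0. butlast t = butlast s}. v (t, d)) = 0"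
      by (simp add: D_aug_def)
  qed
  then show "\<exists>u\<in>D_car n X x 1. (\<lambda>a. v a - D_diff X x 0 u a) \<in> D_ker n X x 0"
    using D_lift_in_D_car[OF v] by (auto simp: One_nat_def)
qed (rule D_aug_D_diff_in_B_ker)

lemma D_diff_exact:
  assumes fin: "finite X"
  shows "sq_exact (D_car n X x (Suc (Suc i))) (D_car n X x (Suc i)) (D_ker n X x (Suc i))
      (D_ker n X x i) (D_diff X x (Suc i)) (D_diff X x i :: _ \<Rightarrow> int list \<times> diagram \<Rightarrow> 'r::comm_ring_1)"
  unfolding sq_exact_def
proof (intro conjI ballI impI)
  fix v :: "int list \<times> diagram \<Rightarrow> 'r"
  assume v: "v \<in> D_car n X x (Suc i)" and diff: "D_diff X x i v \<in> D_ker n X x i"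
  have "(\<lambda>a. v a - D_diff X x (Suc i) (D_lift X x (Suc (Suc i)) v) a) \<in> D_ker n X x (Suc i)"
  proof (rule D_lift_exact[OF fin v])
    fix s d assume nJ: "\<not> Jset (X - insert x (set (butlast s))) d"
    have "D_diff X x i v (butlast s, d) = 0"
      using supp_inD[OF diff[unfolded D_ker_def], of "(butlast s, d)"] nJ by auto
    then show "(\<Sum>t\<in>{t \<in> tuples X x (Suc i). butlast t = butlast s}. v (t, d)) = 0"
      by (simp add: D_diff_def)
  qed
  then show "\<exists>u\<in>D_car n X x (Suc (Suc i)). (\<lambda>a. v a - D_diff X x (Suc i) u a) \<in> D_ker n X x (Suc i)"
    using D_lift_in_D_car[OF v] by blast
qed (rule D_diff_D_diff_in_D_ker)

section \<open>Composing a diagram with its right mirror\<close>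

definition mirror_block :: "int set \<Rightarrow> int set" where
  "mirror_block B = {c. c \<noteq> 0 \<and> \<bar>c\<bar> \<in> B}"

definition right_mirror :: "diagram \<Rightarrow> diagram" where
  "right_mirror d = {mirror_block B | B. B \<in> d \<and> (\<exists>b\<in>B. 0 < b)}"

lemma right_mirror_in_diagrams:
  assumes d: "d \<in> diagrams n"
  shows "right_mirror d \<in> diagrams n"
  unfolding diagrams_def
proof (intro CollectI partition_onI)
  show "\<Union>(right_mirror d) = nodes n"
  proof (intro equalityI subsetI)
    fix c assume "c \<in> \<Union>(right_mirror d)"
    then obtain B where "B \<in> d" "c \<noteq> 0" "\<bar>c\<bar> \<in> B"
      by (auto simp: right_mirror_def mirror_block_def)
    then show "c \<in> nodes n" using diagram_block_subset[OF d] by (force simp: nodes_def)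
  next
    fix c assume c: "c \<in> nodes n"
    then have "\<bar>c\<bar> \<in> nodes n" "0 < \<bar>c\<bar>" by (auto simp: nodes_def)
    then obtain B where B: "B \<in> d" "\<bar>c\<bar> \<in> B" using diagram_covers[OF d] by blast
    then have "mirror_block B \<in> right_mirror d"
      using \<open>0 < \<bar>c\<bar>\<close> unfolding right_mirror_def by blast
    moreover have "c \<in> mirror_block B" using B(2) c by (auto simp: mirror_block_def nodes_def)
    ultimately show "c \<in> \<Union>(right_mirror d)" by blast
  qed
next
  fix P Q assume "P \<in> right_mirror d" "Q \<in> right_mirror d" "P \<noteq> Q"
  then show "disjnt P Q"
    using diagram_block_unique[OF d] by (auto simp: right_mirror_def mirror_block_def disjnt_def)
next
  show "{} \<notin> right_mirror d"
  proof
    assume "{} \<in> right_mirror d"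
    then obtain B b where "mirror_block B = {}" "b \<in> B" "0 < b" unfolding right_mirror_def by blast
    moreover from this have "b \<in> mirror_block B" by (simp add: mirror_block_def)
    ultimately show False by simp
  qed
qed

lemma blk_right_mirror:
  assumes "blk (right_mirror d) a b"
  shows "blk d \<bar>a\<bar> \<bar>b\<bar>"
proof -
  obtain B where "B \<in> d" "a \<in> mirror_block B" "b \<in> mirror_block B"
    using assms unfolding blk_def right_mirror_def by blast
  then show ?thesis unfolding blk_def mirror_block_def by blast
qed

lemma blk_right_mirror_middle:
  assumes d: "d \<in> diagrams n" and j: "j \<in> {1..int n}"
  shows "blk (right_mirror d) (- j) j"
proof -
  have "0 < j" "j \<in> nodes n" using j by (auto simp: nodes_def)
  then obtain B where B: "B \<in> d" "j \<in> B" using diagram_covers[OF d] by blast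
  then have "mirror_block B \<in> right_mirror d"
    using \<open>0 < j\<close> unfolding right_mirror_def by blast
  moreover have "- j \<in> mirror_block B" "j \<in> mirror_block B"
    using B(2) \<open>0 < j\<close> by (auto simp: mirror_block_def)
  ultimately show ?thesis unfolding blk_def by blast
qed

lemma Mset_right_mirror:
  assumes "Mset Y d" "Y \<noteq> {}" "Y \<subseteq> {0<..}"
  shows "Mset Y (right_mirror d)"
proof -
  obtain B where "B \<in> d" "Y \<subseteq> B" using assms(1) unfolding Mset_def by blast
  moreover have "Y \<subseteq> mirror_block B"
    using \<open>Y \<subseteq> B\<close> assms(3) by (auto simp: mirror_block_def subset_iff)
  ultimately show ?thesis using assms(2,3) unfolding Mset_def right_mirror_def by blast
qed

lemma stack_conn_left: "blk d a b \<Longrightarrow> (emb1 a, emb1 b) \<in> stack_conn d e"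
  unfolding stack_conn_def by (rule r_into_trancl) blast

lemma stack_conn_right: "blk e a b \<Longrightarrow> (emb2 a, emb2 b) \<in> stack_conn d e"
  unfolding stack_conn_def by (rule r_into_trancl) blast

lemma stack_conn_right_mirror_blk:
  assumes d: "d \<in> diagrams n" and pq: "(p, q) \<in> stack_conn d (right_mirror d)"
  shows "blk d (snd p) (snd q)"
proof -
  let ?E = "{(emb1 a, emb1 b) | a b. blk d a b} \<union>
    {(emb2 a, emb2 b) | a b. blk (right_mirror d) a b}"
  have snd_emb: "snd (emb1 a) = a" "snd (emb2 a) = \<bar>a\<bar>" for a
    by (simp_all add: emb1_def emb2_def)
  have edge: "blk d (snd p') (snd q')" if "(p', q') \<in> ?E" for p' q'
    using that blk_right_mirror by (auto simp: snd_emb)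
  from pq have "(p, q) \<in> ?E\<^sup>+" unfolding stack_conn_def .
  then show ?thesis
  proof (induction rule: trancl_induct)
    case (base y)
    then show ?case by (rule edge)
  next
    case (step y z)
    show ?case using blk_trans[OF d step.IH edge[OF step.hyps(2)]] .
  qed
qed

lemma outer_emb1_right_mirror:
  assumes d: "d \<in> diagrams n" and c: "c \<in> nodes n"
  shows "(outer c, emb1 c) \<in> (stack_conn d (right_mirror d))\<^sup>="
    and "(emb1 c, outer c) \<in> (stack_conn d (right_mirror d))\<^sup>="
proof -
  consider (left) "c < 0" | (right) "c \<in> {1..int n}" using c by (force simp: nodes_def)
  then have "outer c = emb1 c \<or> (outer c, emb1 c) \<in> stack_conn d (right_mirror d) \<and>
      (emb1 c, outer c) \<in> stack_conn d (right_mirror d)"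
  proof cases
    case left
    then show ?thesis by (simp add: emb1_def outer_def)
  next
    case right
    then have "blk (right_mirror d) (- c) c" by (rule blk_right_mirror_middle[OF d])
    moreover have "emb2 (- c) = emb1 c" "emb2 c = outer c"
      using right by (simp_all add: emb1_def emb2_def outer_def)
    ultimately show ?thesis using stack_conn_right blk_sym by metis
  qed
  then show "(outer c, emb1 c) \<in> (stack_conn d (right_mirror d))\<^sup>="
    and "(emb1 c, outer c) \<in> (stack_conn d (right_mirror d))\<^sup>="
    by auto
qed

lemma blk_stack_conn_right_mirror:
  assumes d: "d \<in> diagrams n" and ab: "blk d a b"
  shows "(outer a, outer b) \<in> stack_conn d (right_mirror d)"
proof -
  have "a \<in> nodes n" "b \<in> nodes n"
    using ab diagram_block_subset[OF d] unfolding blk_def by blast+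
  note to_emb1 = outer_emb1_right_mirror(1)[OF d \<open>a \<in> nodes n\<close>]
    and from_emb1 = outer_emb1_right_mirror(2)[OF d \<open>b \<in> nodes n\<close>]
  have tr: "trans (stack_conn d (right_mirror d))"
    unfolding stack_conn_def by (rule trans_trancl)
  have "(outer a, emb1 b) \<in> stack_conn d (right_mirror d)"
    using to_emb1 stack_conn_left[OF ab] tr by (auto dest: transD)
  then show ?thesis using from_emb1 tr by (auto dest: transD)
qed

lemma middle_stack_conn_right_mirror:
  assumes d: "d \<in> diagrams n" and j: "j \<in> {1..int n}"
  shows "((1, j), outer j) \<in> stack_conn d (right_mirror d)"
proof -
  have "emb2 (- j) = (1, j)" "emb2 j = outer j" using j by (simp_all add: emb2_def outer_def)
  then show ?thesis using stack_conn_right[OF blk_right_mirror_middle[OF d j]] by metis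
qed

lemma diag_comp_right_mirror:
  assumes d: "d \<in> diagrams n"
  shows "diag_comp n d (right_mirror d) = d"
proof -
  have block: "{b \<in> nodes n. (outer a, outer b) \<in> stack_conn d (right_mirror d)} = B"
    if B: "B \<in> d" "a \<in> B" for a B
  proof (intro equalityI subsetI)
    fix b assume "b \<in> {b \<in> nodes n. (outer a, outer b) \<in> stack_conn d (right_mirror d)}"
    then have "blk d (snd (outer a)) (snd (outer b))" using stack_conn_right_mirror_blk[OF d] by blast
    moreover have "snd (outer c) = c" for c by (simp add: outer_def)
    ultimately have "blk d a b" by simp
    then show "b \<in> B" using B diagram_block_unique[OF d] unfolding blk_def by blast
  next
    fix b assume "b \<in> B"
    then have "blk d a b" "b \<in> nodes n" using B diagram_block_subset[OF d] unfolding blk_def by blast+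
    then show "b \<in> {b \<in> nodes n. (outer a, outer b) \<in> stack_conn d (right_mirror d)}"
      using blk_stack_conn_right_mirror[OF d] by blast
  qed
  show ?thesis
  proof (intro equalityI subsetI)
    fix C assume "C \<in> diag_comp n d (right_mirror d)"
    then obtain a where a: "a \<in> nodes n"
      and C: "C = {b \<in> nodes n. (outer a, outer b) \<in> stack_conn d (right_mirror d)}"
      unfolding diag_comp_def by blast
    obtain B where "B \<in> d" "a \<in> B" using diagram_covers[OF d a] by blast
    then show "C \<in> d" using block C by simp
  next
    fix B assume B: "B \<in> d"
    then have "B \<noteq> {}" using d by (auto simp: diagrams_def partition_on_def)
    then obtain a where "a \<in> B" by blast
    then show "B \<in> diag_comp n d (right_mirror d)"
      using block[OF B] diagram_block_subset[OF d B] unfolding diag_comp_def by blast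
  qed
qed

lemma loops_right_mirror:
  assumes d: "d \<in> diagrams n"
  shows "loops n d (right_mirror d) = 0"
proof -
  have "j \<in> nodes n" if "j \<in> {1..int n}" for j using that by (simp add: nodes_def)
  then have empty: "{stack_conn d (right_mirror d) `` {(1, j)} | j. j \<in> {1..int n} \<and>
      (\<forall>b \<in> nodes n. ((1, j), outer b) \<notin> stack_conn d (right_mirror d))} = {}"
    using middle_stack_conn_right_mirror[OF d] by blast
  show ?thesis unfolding loops_def empty by simp
qed

section \<open>Tensoring with the trivial module\<close>

definition unit_vec :: "'a \<Rightarrow> 'a \<Rightarrow> 'r::comm_ring_1" where
  "unit_vec a = (\<lambda>z. if z = a then 1 else 0)"

lemma dact_unit_vec:
  assumes "d \<in> diagrams n" "loops n e d = 0"
  shows "dact n \<delta> e (unit_vec (t, d)) = unit_vec (t, diag_comp n e d)"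
proof (intro ext, clarify)
  fix t' g
  let ?A = "{d' \<in> diagrams n. diag_comp n e d' = g}"
  have "dact n \<delta> e (unit_vec (t, d)) (t', g)
      = (\<Sum>d'\<in>?A. if d' = d then (if t' = t then \<delta> ^ loops n e d' else 0) else 0)"
    by (auto simp: dact_def unit_vec_def intro!: sum.cong)
  also have "\<dots> = unit_vec (t, diag_comp n e d) (t', g)"
    using assms finite_diagrams[of n] by (auto simp: unit_vec_def)
  finally show "dact n \<delta> e (unit_vec (t, d)) (t', g) = unit_vec (t, diag_comp n e d) (t', g)" .
qed

lemma not_perm_diagram:
  assumes "blk d a b" "a \<noteq> b" "0 < a" "0 < b"
  shows "\<not> perm_diagram n d"
proof
  assume perm: "perm_diagram n d"
  obtain B where "B \<in> d" "a \<in> B" "b \<in> B" using assms(1) unfolding blk_def by blast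
  moreover from \<open>B \<in> d\<close> obtain i j where "B = {- i, j}" "i \<in> {1..int n}"
    using perm unfolding perm_diagram_def by blast
  ultimately show False using assms(2-4) by auto
qed

lemma unit_vec_in_triv_rel:
  fixes \<delta> :: "'r::comm_ring_1"
  assumes d: "d \<in> diagrams n" and "\<not> perm_diagram n d" and "(t, right_mirror d) \<in> S"
  shows "unit_vec (t, d) \<in> triv_rel n \<delta> (supp_in S)"
proof -
  let ?v = "unit_vec (t, right_mirror d)"
  have v: "?v \<in> supp_in S" using assms(3) by (auto simp: supp_in_def unit_vec_def)
  have "dact n \<delta> d ?v = unit_vec (t, d)"
    using dact_unit_vec[OF right_mirror_in_diagrams[OF d] loops_right_mirror[OF d]]
    by (simp add: diag_comp_right_mirror[OF d])
  moreover have "triv n d = (0::'r)" using assms(2) by (simp add: triv_def)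
  ultimately have "unit_vec (t, d) = (\<lambda>a. dact n \<delta> d ?v a - triv n d * ?v a)" by simp
  with d v show ?thesis unfolding triv_rel_def by (blast intro: rspan.gen)
qed

lemma supp_in_subset_rspan:
  fixes G :: "('a \<Rightarrow> 'r::comm_ring_1) set"
  assumes "finite F" "\<And>a. a \<in> F \<Longrightarrow> unit_vec a \<in> rspan G"
  shows "supp_in F \<subseteq> rspan G"
  using assms
proof (induction F rule: finite_induct)
  case empty
  show ?case
  proof
    fix v :: "'a \<Rightarrow> 'r" assume "v \<in> supp_in {}"
    then have "v = (\<lambda>_. 0)" by (auto simp: supp_in_def fun_eq_iff)
    then show "v \<in> rspan G" by (simp add: rspan.zero)
  qed
next
  case (insert a F)
  show ?case
  proof
    fix v :: "'a \<Rightarrow> 'r" assume v: "v \<in> supp_in (insert a F)"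
    let ?w = "\<lambda>z. v z - v a * unit_vec a z"
    have "?w \<in> supp_in F" using v by (auto simp: supp_in_def unit_vec_def)
    then have "?w \<in> rspan G" using insert by blast
    moreover have "(\<lambda>z. v a * unit_vec a z) \<in> rspan G" using insert.prems by (simp add: rspan.smult)
    ultimately have "(\<lambda>z. ?w z + v a * unit_vec a z) \<in> rspan G" by (rule rspan.add)
    then show "v \<in> rspan G" by simp
  qed
qed

lemma supp_in_subset_triv_rel:
  assumes "finite S"
    and "\<And>t d. (t, d) \<in> S \<Longrightarrow> d \<in> diagrams n \<and> \<not> perm_diagram n d \<and> (t, right_mirror d) \<in> S"
  shows "supp_in S \<subseteq> triv_rel n \<delta> (supp_in S)"
proof -
  have "unit_vec a \<in> triv_rel n \<delta> (supp_in S)" if "a \<in> S" for a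
    using that assms(2) unit_vec_in_triv_rel by (metis prod.collapse)
  then show ?thesis using supp_in_subset_rspan[OF assms(1)] unfolding triv_rel_def by blast
qed

lemma D_car_subset_triv_rel:
  assumes X: "X \<subseteq> {1..int n}" and x: "x \<in> X"
  shows "D_car n X x i \<subseteq> triv_rel n \<delta> (D_car n X x i)"
  unfolding D_car_def
proof (rule supp_in_subset_triv_rel)
  have "finite X" using X finite_subset by blast
  show "finite {(t, d). t \<in> tuples X x i \<and> d \<in> diagrams n \<and> Mset (insert x (set t)) d}"
    by (rule finite_subset[OF _ finite_cartesian_product[OF finite_tuples[OF \<open>finite X\<close>] finite_diagrams]])
      auto
next
  fix t d assume "(t, d) \<in> {(t, d). t \<in> tuples X x i \<and> d \<in> diagrams n \<and> Mset (insert x (set t)) d}"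
  then have t: "t \<in> tuples X x i" and d: "d \<in> diagrams n" and M: "Mset (insert x (set t)) d" by auto
  have pos: "insert x (set t) \<subseteq> {0<..}" using t x X by (auto simp: tuples_def)
  have "last t \<in> set t" "last t \<noteq> x" using tuples_snoc(2,3)[OF t] by auto
  then have "\<not> perm_diagram n d"
    using not_perm_diagram[OF Mset_blk[OF M]] pos by (metis insertCI subsetD greaterThan_iff)
  moreover have "Mset (insert x (set t)) (right_mirror d)" using Mset_right_mirror[OF M _ pos] by simp
  ultimately show "d \<in> diagrams n \<and> \<not> perm_diagram n d \<and>
      (t, right_mirror d) \<in> {(t, d). t \<in> tuples X x i \<and> d \<in> diagrams n \<and> Mset (insert x (set t)) d}"
    using t d right_mirror_in_diagrams[OF d] by simp
qed

lemma B_car_subset_triv_rel: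
  assumes X: "X \<subseteq> {1..int n}" and x: "x \<in> X"
  shows "B_car n X x \<subseteq> triv_rel n \<delta> (B_car n X x)"
  unfolding B_car_def
proof (rule supp_in_subset_triv_rel)
  show "finite {(u :: unit, d). d \<in> diagrams n \<and> Bset X x d}"
    by (rule finite_subset[OF _ finite_cartesian_product[OF finite_UNIV finite_diagrams]]) auto
next
  fix u :: unit and d assume "(u, d) \<in> {(u, d). d \<in> diagrams n \<and> Bset X x d}"
  then have d: "d \<in> diagrams n" and "Bset X x d" by auto
  then obtain y where y: "y \<in> X" "y \<noteq> x" "blk d x y" unfolding Bset_def by blast
  have pos: "0 < x" "0 < y" using x y X by auto
  have "\<not> perm_diagram n d" using not_perm_diagram[OF y(3)] y(2) pos by metis
  moreover have "blk (right_mirror d) x y"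
    using Mset_right_mirror[of "{x, y}"] y(3) pos unfolding blk_iff_Mset by simp
  then have "Bset X x (right_mirror d)" using y unfolding Bset_def by blast
  ultimately show "d \<in> diagrams n \<and> \<not> perm_diagram n d \<and>
      (u, right_mirror d) \<in> {(u, d). d \<in> diagrams n \<and> Bset X x d}"
    using d right_mirror_in_diagrams[OF d] by simp
qed

lemma ker_subset_tensor_triv_ker: "K \<subseteq> tensor_triv_ker n \<delta> A K"
proof
  fix k assume "k \<in> K"
  moreover have "(\<lambda>_. 0) \<in> triv_rel n \<delta> A" unfolding triv_rel_def by (rule rspan.zero)
  ultimately show "k \<in> tensor_triv_ker n \<delta> A K"
    unfolding tensor_triv_ker_def ksum_def by force
qed

lemma subset_tensor_triv_ker:
  assumes "A \<subseteq> triv_rel n \<delta> A" "(\<lambda>_. 0) \<in> K"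
  shows "A \<subseteq> tensor_triv_ker n \<delta> A K"
proof
  fix v assume "v \<in> A"
  with assms show "v \<in> tensor_triv_ker n \<delta> A K"
    unfolding tensor_triv_ker_def ksum_def by force
qed

lemma sq_surj_tensor_triv:
  assumes "(\<lambda>_. 0) \<in> A1" "f (\<lambda>_. 0) = (\<lambda>_. 0)" "A2 \<subseteq> triv_rel n \<delta> A2" "(\<lambda>_. 0) \<in> K2"
  shows "sq_surj A1 A2 (tensor_triv_ker n \<delta> A2 K2) f"
  using assms(1,2) subset_tensor_triv_ker[OF assms(3,4)] unfolding sq_surj_def
  by (intro ballI bexI[of _ "\<lambda>_. 0"]) auto

lemma sq_exact_tensor_triv:
  assumes "sq_exact A1 A2 K2 K3 f g"
    and "(\<lambda>_. 0) \<in> A1" "f (\<lambda>_. 0) = (\<lambda>_. 0)" "A2 \<subseteq> triv_rel n \<delta> A2" "(\<lambda>_. 0) \<in> K2"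
  shows "sq_exact A1 A2 (tensor_triv_ker n \<delta> A2 K2) (tensor_triv_ker n \<delta> A3 K3) f g"
  using assms(1) ker_subset_tensor_triv_ker[of K3] sq_surj_tensor_triv[where f = f, OF assms(2-5)]
  unfolding sq_exact_def sq_surj_def by blast

theorem proposition4p11:
  fixes n :: nat and \<delta> :: "'r::comm_ring_1" and X :: "int set" and x :: int
  assumes "X \<subseteq> {1..int n}" and "x \<in> X"
  shows
    "(sq_surj (D_car n X x 0) (B_car n X x) (B_ker n X x) (D_aug X x :: _ \<Rightarrow> unit \<times> diagram \<Rightarrow> 'r)
      \<and> sq_exact (D_car n X x 1) (D_car n X x 0) (D_ker n X x 0) (B_ker n X x)
           (D_diff X x 0) (D_aug X x)
      \<and> (\<forall>i. sq_exact (D_car n X x (Suc (Suc i))) (D_car n X x (Suc i)) (D_ker n X x (Suc i))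
           (D_ker n X x i) (D_diff X x (Suc i)) (D_diff X x i)))
   \<and>
    (sq_surj (D_car n X x 0) (B_car n X x)
        (tensor_triv_ker n \<delta> (B_car n X x) (B_ker n X x)) (D_aug X x)
      \<and> sq_exact (D_car n X x 1) (D_car n X x 0)
           (tensor_triv_ker n \<delta> (D_car n X x 0) (D_ker n X x 0))
           (tensor_triv_ker n \<delta> (B_car n X x) (B_ker n X x))
           (D_diff X x 0) (D_aug X x)
      \<and> (\<forall>i. sq_exact (D_car n X x (Suc (Suc i))) (D_car n X x (Suc i))
           (tensor_triv_ker n \<delta> (D_car n X x (Suc i)) (D_ker n X x (Suc i)))
           (tensor_triv_ker n \<delta> (D_car n X x i) (D_ker n X x i))
           (D_diff X x (Suc i)) (D_diff X x i)))"
proof -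
  have fin: "finite X" using assms(1) finite_subset by blast
  have zero: "(\<lambda>_. 0) \<in> D_car n X x i" "(\<lambda>_. 0) \<in> D_ker n X x i" "(\<lambda>_. 0) \<in> B_ker n X x" for i
    by (simp_all add: D_car_def D_ker_def B_ker_def supp_in_def)
  have maps_zero: "D_aug X x (\<lambda>_. 0) = (\<lambda>_. 0)" "D_diff X x i (\<lambda>_. 0) = (\<lambda>_. 0)" for i
    by (simp_all add: D_aug_def D_diff_def fun_eq_iff)
  note D_triv = D_car_subset_triv_rel[OF assms, where \<delta> = \<delta>]
  note B_triv = B_car_subset_triv_rel[OF assms, where \<delta> = \<delta>]
  show ?thesis
    by (intro conjI allI D_aug_surj D_aug_exact D_diff_exact fin
        sq_surj_tensor_triv sq_exact_tensor_triv zero maps_zero D_triv B_triv)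
qed

end
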